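(* Let $k\ge3$, $2\le s\le k$, $\mathbf n=(n_1,\dots,n_k)$, $r\le\min\{n_1,\dots,n_s\}$. If $\mathcal A\in P_s(\mathbf n,r)$ has a decomposition $\mathcal A=\sum_{i=1}^r\sigma_i\mathbf a^{(1)}_i\otimes\cdots\otimes\mathbf a^{(k)}_i$ with all $\mathbf a^{(l)}_i$ unit vectors and $\mathbf a^{(l)}_1,\dots,\mathbf a^{(l)}_r$ pairwise orthogonal for each $l\le s$, then $\operatorname{rank}(\mathcal A)=\#\{i:\sigma_i\ne0\}$, and a partially orthogonal rank decomposition of $\mathcal A$ is a rank decomposition.
   Context: $P_s(\mathbf n,r)$ is the set of tensors admitting a decomposition as in the claim. The (CP) rank of a tensor is the least number of rank-one tensors summing to it; a rank decomposition is one with that many terms. A partially orthogonal rank decomposition of $\mathcal A$ is a decomposition of the form in the claim (unit factors, orthonormal factors in the first $s$ modes) with the smallest possible number of terms. *)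

theory Defs
  imports Complex_Main
begin

text \<open>Order-k real tensors of size n 0 x ... x n (k-1) (modes indexed 0..k-1).
  A tensor is a function from index tuples (idx :: nat => nat) to reals; only its
  values on valid index tuples (idx l < n l for l < k) matter.
  A vector of mode l is a function nat => real whose entries j < n l matter.\<close>

definition valid_idx :: "nat \<Rightarrow> (nat \<Rightarrow> nat) \<Rightarrow> (nat \<Rightarrow> nat) \<Rightarrow> bool" where
  "valid_idx k n idx \<longleftrightarrow> (\<forall>l<k. idx l < n l)"

definition tensor_eq :: "nat \<Rightarrow> (nat \<Rightarrow> nat) \<Rightarrow> ((nat \<Rightarrow> nat) \<Rightarrow> real) \<Rightarrow> ((nat \<Rightarrow> nat) \<Rightarrow> real) \<Rightarrow> bool" where
  "tensor_eq k n A B \<longleftrightarrow> (\<forall>idx. valid_idx k n idx \<longrightarrow> A idx = B idx)"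

definition outer :: "nat \<Rightarrow> (nat \<Rightarrow> nat \<Rightarrow> real) \<Rightarrow> (nat \<Rightarrow> nat) \<Rightarrow> real" where
  "outer k a = (\<lambda>idx. \<Prod>l<k. a l (idx l))"

definition inner_vec :: "nat \<Rightarrow> (nat \<Rightarrow> real) \<Rightarrow> (nat \<Rightarrow> real) \<Rightarrow> real" where
  "inner_vec m u v = (\<Sum>j<m. u j * v j)"

definition unit_vec :: "nat \<Rightarrow> (nat \<Rightarrow> real) \<Rightarrow> bool" where
  "unit_vec m u \<longleftrightarrow> inner_vec m u u = 1"

definition is_decomp :: "nat \<Rightarrow> (nat \<Rightarrow> nat) \<Rightarrow> ((nat \<Rightarrow> nat) \<Rightarrow> real) \<Rightarrow> nat
    \<Rightarrow> (nat \<Rightarrow> nat \<Rightarrow> nat \<Rightarrow> real) \<Rightarrow> bool" where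
  "is_decomp k n A r a \<longleftrightarrow> tensor_eq k n A (\<lambda>idx. \<Sum>i<r. outer k (a i) idx)"

definition tensor_rank :: "nat \<Rightarrow> (nat \<Rightarrow> nat) \<Rightarrow> ((nat \<Rightarrow> nat) \<Rightarrow> real) \<Rightarrow> nat" where
  "tensor_rank k n A = (LEAST r. \<exists>a. is_decomp k n A r a)"

definition po_decomp :: "nat \<Rightarrow> (nat \<Rightarrow> nat) \<Rightarrow> nat \<Rightarrow> ((nat \<Rightarrow> nat) \<Rightarrow> real) \<Rightarrow> nat
    \<Rightarrow> (nat \<Rightarrow> real) \<Rightarrow> (nat \<Rightarrow> nat \<Rightarrow> nat \<Rightarrow> real) \<Rightarrow> bool" where
  "po_decomp k n s A r \<sigma> a \<longleftrightarrow>
     tensor_eq k n A (\<lambda>idx. \<Sum>i<r. \<sigma> i * outer k (a i) idx) \<and>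
     (\<forall>i<r. \<forall>l<k. unit_vec (n l) (a i l)) \<and>
     (\<forall>l<s. \<forall>i<r. \<forall>j<r. i \<noteq> j \<longrightarrow> inner_vec (n l) (a i l) (a j l) = 0)"

definition P_s :: "nat \<Rightarrow> (nat \<Rightarrow> nat) \<Rightarrow> nat \<Rightarrow> nat \<Rightarrow> ((nat \<Rightarrow> nat) \<Rightarrow> real) set" where
  "P_s k n s r = {A. \<exists>\<sigma> a. po_decomp k n s A r \<sigma> a}"

definition po_rank :: "nat \<Rightarrow> (nat \<Rightarrow> nat) \<Rightarrow> nat \<Rightarrow> ((nat \<Rightarrow> nat) \<Rightarrow> real) \<Rightarrow> nat" where
  "po_rank k n s A = (LEAST r. \<exists>\<sigma> a. po_decomp k n s A r \<sigma> a)"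

end

theory Submission
  imports Defs "HOL-Library.Function_Algebras"
begin

text \<open>Contracting \<open>A\<close> in mode 0 with the orthonormal factors \<open>a_j^(0)\<close> yields the order
  \<open>k - 1\<close> tensors \<open>\<sigma>_j a_j^(1) \<otimes> ... \<otimes> a_j^(k-1)\<close>. Those with \<open>\<sigma>_j \<noteq> 0\<close> are linearly
  independent, since contracting in mode 1 (orthonormal again) isolates each of them; but
  contracting any decomposition of \<open>A\<close> into \<open>r'\<close> rank-one terms in mode 0 shows that they lie
  in the span of \<open>r'\<close> tensors. So every decomposition has at least \<open>#{i. \<sigma>_i \<noteq> 0}\<close> terms, and
  dropping the zero terms gives a partially orthogonal decomposition of exactly that length.\<close>

lemma eq_if_independent_on:
  fixes u :: "'i \<Rightarrow> 'a \<Rightarrow> real"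
  assumes fin: "finite S"
    and indep: "\<And>g. \<forall>x\<in>D. (\<Sum>j\<in>S. g j * u j x) = 0 \<Longrightarrow> \<forall>j\<in>S. g j = 0"
    and j: "j1 \<in> S" "j2 \<in> S" and eq: "\<forall>x\<in>D. u j1 x = u j2 x"
  shows "j1 = j2"
proof (rule ccontr)
  assume ne: "j1 \<noteq> j2"
  define g where "g j = (if j = j1 then 1 else if j = j2 then -1 else (0::real))" for j
  have "(\<Sum>j\<in>S. g j * u j x) = u j1 x - u j2 x" for x
  proof -
    have "(\<Sum>j\<in>S. g j * u j x)
        = (\<Sum>j\<in>S. (if j = j1 then u j x else 0) - (if j = j2 then u j x else 0))"
      using ne by (intro sum.cong) (auto simp: g_def)
    then show ?thesis using j fin by (simp add: sum_subtractf)
  qed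
  then have "\<forall>x\<in>D. (\<Sum>j\<in>S. g j * u j x) = 0"
    using eq by simp
  then show False using indep j(1) by (force simp: g_def)
qed

lemma card_le_if_independent_in_span_on:
  fixes u :: "'i \<Rightarrow> 'a \<Rightarrow> real" and w :: "nat \<Rightarrow> 'a \<Rightarrow> real"
  assumes fin: "finite S"
    and span: "\<And>j. j \<in> S \<Longrightarrow> \<exists>c. \<forall>x\<in>D. u j x = (\<Sum>i<m. c i * w i x)"
    and indep: "\<And>g. \<forall>x\<in>D. (\<Sum>j\<in>S. g j * u j x) = 0 \<Longrightarrow> \<forall>j\<in>S. g j = 0"
  shows "card S \<le> m"
proof -
  interpret fun_space: vector_space "\<lambda>(c::real) (f::'a \<Rightarrow> real) x. c * f x"
    by unfold_locales (auto simp: fun_eq_iff algebra_simps)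
  \<comment> \<open>Restricting to \<open>D\<close> (zero outside) identifies functions that agree on \<open>D\<close>.\<close>
  define restr where "restr f = (\<lambda>x. if x \<in> D then f x else 0)" for f :: "'a \<Rightarrow> real"
  have sum_apply: "(\<Sum>j\<in>J. F j) x = (\<Sum>j\<in>J. F j x)" for J and F :: "_ \<Rightarrow> 'a \<Rightarrow> real" and x
    by (induct J rule: infinite_finite_induct) auto
  have inj: "inj_on (restr \<circ> u) S"
  proof (rule inj_onI)
    fix j1 j2 assume j: "j1 \<in> S" "j2 \<in> S" and eq: "(restr \<circ> u) j1 = (restr \<circ> u) j2"
    have "\<forall>x\<in>D. u j1 x = u j2 x"
    proof
      fix x assume "x \<in> D"
      then show "u j1 x = u j2 x" using fun_cong[OF eq, of x] by (simp add: restr_def)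
    qed
    then show "j1 = j2"
      using eq_if_independent_on[of S D u j1 j2] fin indep j by blast
  qed
  have "fun_space.independent ((restr \<circ> u) ` S)"
  proof (rule fun_space.independent_if_scalars_zero)
    show "finite ((restr \<circ> u) ` S)" using fin by simp
  next
    fix f v assume zero: "(\<Sum>v\<in>(restr \<circ> u) ` S. (\<lambda>x. f v * v x)) = 0" and v: "v \<in> (restr \<circ> u) ` S"
    have "(\<Sum>j\<in>S. f (restr (u j)) * u j x) = 0" if "x \<in> D" for x
    proof -
      have "(\<Sum>v\<in>(restr \<circ> u) ` S. f v * v x) = 0"
        using fun_cong[OF zero, of x] by (simp add: sum_apply)
      then have "(\<Sum>j\<in>S. f (restr (u j)) * restr (u j) x) = 0"
        unfolding sum.reindex[OF inj] by simp
      then show ?thesis using that by (simp add: restr_def)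
    qed
    then have "\<forall>j\<in>S. f (restr (u j)) = 0"
      using indep[of "\<lambda>j. f (restr (u j))"] by blast
    then show "f v = 0" using v by auto
  qed
  moreover have "(restr \<circ> u) ` S \<subseteq> fun_space.span ((restr \<circ> w) ` {..<m})"
  proof
    fix v assume "v \<in> (restr \<circ> u) ` S"
    then obtain j c where j: "v = restr (u j)" and c: "\<forall>x\<in>D. u j x = (\<Sum>i<m. c i * w i x)"
      using span by force
    have v_comb: "v = (\<Sum>i<m. (\<lambda>x. c i * restr (w i) x))"
      using c by (auto simp: j fun_eq_iff sum_apply restr_def)
    show "v \<in> fun_space.span ((restr \<circ> w) ` {..<m})"
      unfolding v_comb by (intro fun_space.span_sum fun_space.span_scale fun_space.span_base) auto
  qed
  ultimately have "card ((restr \<circ> u) ` S) \<le> card ((restr \<circ> w) ` {..<m})"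
    using fun_space.independent_span_bound by blast
  also have "\<dots> \<le> m" using card_image_le[of "{..<m}"] by simp
  finally show ?thesis using card_image[OF inj] by simp
qed

lemma contract_prod:
  assumes "finite L" and "m \<in> L"
  shows "(\<Sum>t<N. v t * (\<Prod>l\<in>L. c l ((idx(m := t)) l)))
       = inner_vec N v (c m) * (\<Prod>l\<in>L - {m}. c l (idx l))"
proof -
  have "(\<Prod>l\<in>L. c l ((idx(m := t)) l)) = c m t * (\<Prod>l\<in>L - {m}. c l (idx l))" for t
    using assms by (simp add: prod.remove)
  then show ?thesis
    by (simp add: inner_vec_def sum_distrib_right algebra_simps)
qed

lemma contract_sum_prod:
  assumes "finite L" and "m \<in> L" and "finite I"
  shows "(\<Sum>t<N. v t * (\<Sum>i\<in>I. \<gamma> i * (\<Prod>l\<in>L. c i l ((idx(m := t)) l))))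
       = (\<Sum>i\<in>I. \<gamma> i * inner_vec N v (c i m) * (\<Prod>l\<in>L - {m}. c i l (idx l)))"
proof -
  have "(\<Sum>t<N. v t * (\<Sum>i\<in>I. \<gamma> i * (\<Prod>l\<in>L. c i l ((idx(m := t)) l))))
      = (\<Sum>i\<in>I. \<gamma> i * (\<Sum>t<N. v t * (\<Prod>l\<in>L. c i l ((idx(m := t)) l))))"
    by (simp add: sum_distrib_left sum.swap[of _ I] algebra_simps)
  also have "\<dots> = (\<Sum>i\<in>I. \<gamma> i * (inner_vec N v (c i m) * (\<Prod>l\<in>L - {m}. c i l (idx l))))"
    by (simp only: contract_prod[OF assms(1,2)])
  finally show ?thesis
    by (simp add: mult.assoc)
qed

lemma contract_sum_prod_orthonormal:
  assumes "finite L" and "m \<in> L" and "finite I" and "j \<in> I"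
    and "\<And>i. i \<in> I \<Longrightarrow> inner_vec N (c j m) (c i m) = (if i = j then 1 else 0)"
  shows "(\<Sum>t<N. c j m t * (\<Sum>i\<in>I. \<gamma> i * (\<Prod>l\<in>L. c i l ((idx(m := t)) l))))
       = \<gamma> j * (\<Prod>l\<in>L - {m}. c j l (idx l))"
proof -
  have "(\<Sum>t<N. c j m t * (\<Sum>i\<in>I. \<gamma> i * (\<Prod>l\<in>L. c i l ((idx(m := t)) l))))
      = (\<Sum>i\<in>I. if i = j then \<gamma> j * (\<Prod>l\<in>L - {m}. c j l (idx l)) else 0)"
    unfolding contract_sum_prod[OF assms(1-3)] using assms(5) by (intro sum.cong) auto
  then show ?thesis
    using assms(3,4) by simp
qed

lemma unit_vec_nonzero:
  assumes "unit_vec N u"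
  shows "\<exists>t<N. u t \<noteq> 0"
proof (rule ccontr)
  assume "\<not> ?thesis"
  then have "inner_vec N u u = 0" by (simp add: inner_vec_def)
  then show False using assms by (simp add: unit_vec_def)
qed

lemma sum_prod_orthonormal_coeffs_zero:
  assumes "finite L" and "m \<in> L" and "finite I" and "j \<in> I"
    and unit: "\<And>i l. i \<in> I \<Longrightarrow> l \<in> L \<Longrightarrow> unit_vec (n l) (c i l)"
    and orth: "\<And>i. i \<in> I \<Longrightarrow> inner_vec (n m) (c j m) (c i m) = (if i = j then 1 else 0)"
    and zero: "\<And>idx. \<forall>l\<in>L. idx l < n l \<Longrightarrow> (\<Sum>i\<in>I. \<gamma> i * (\<Prod>l\<in>L. c i l (idx l))) = 0"
  shows "\<gamma> j = 0"
proof -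
  obtain idx where idx: "\<And>l. l \<in> L \<Longrightarrow> idx l < n l \<and> c j l (idx l) \<noteq> 0"
    using unit_vec_nonzero[OF unit[OF \<open>j \<in> I\<close>]] by metis
  have "\<gamma> j * (\<Prod>l\<in>L - {m}. c j l (idx l))
      = (\<Sum>t<n m. c j m t * (\<Sum>i\<in>I. \<gamma> i * (\<Prod>l\<in>L. c i l ((idx(m := t)) l))))"
    using contract_sum_prod_orthonormal[OF assms(1-4), of "n m" c] orth by simp
  also have "\<dots> = 0"
    using idx by (simp add: zero)
  finally show ?thesis
    using idx \<open>finite L\<close> by (simp add: prod_zero_iff)
qed

lemma po_decomp_orthonormal:
  assumes "po_decomp k n s A r \<sigma> a" and "s \<le> k" and "l < s" and "i < r" and "j < r"
  shows "inner_vec (n l) (a i l) (a j l) = (if i = j then 1 else 0)"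
  using assms unfolding po_decomp_def unit_vec_def by auto

lemma po_decomp_support_card_le:
  assumes "2 \<le> s" and "s \<le> k"
    and po: "po_decomp k n s A r \<sigma> a" and dec: "is_decomp k n A r' b"
  shows "card {i. i < r \<and> \<sigma> i \<noteq> 0} \<le> r'"
proof -
  define S where "S = {i. i < r \<and> \<sigma> i \<noteq> 0}"
  define D where "D = {idx. \<forall>l\<in>{1..<k}. idx l < n l}"
  define u where "u j idx = (\<Sum>t<n 0. a j 0 t * A (idx(0 := t)))" for j idx
  define w where "w i idx = (\<Prod>l\<in>{1..<k}. b i l (idx l))" for i idx
  have modes: "{..<k} - {0} = {1..<k}" by auto
  have valid: "valid_idx k n (idx(0 := t))" if "idx \<in> D" "t < n 0" for idx t
    using that unfolding D_def valid_idx_def by (auto simp: not_less)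
  have unit: "\<And>i l. i < r \<Longrightarrow> l < k \<Longrightarrow> unit_vec (n l) (a i l)"
    and A_po: "\<And>idx. valid_idx k n idx \<Longrightarrow> A idx = (\<Sum>i<r. \<sigma> i * outer k (a i) idx)"
    using po unfolding po_decomp_def tensor_eq_def by auto
  have A_b: "\<And>idx. valid_idx k n idx \<Longrightarrow> A idx = (\<Sum>i<r'. 1 * outer k (b i) idx)"
    using dec unfolding is_decomp_def tensor_eq_def by simp
  have u_po: "u j idx = \<sigma> j * (\<Prod>l\<in>{1..<k}. a j l (idx l))" if "j < r" "idx \<in> D" for j idx
  proof -
    have "u j idx = (\<Sum>t<n 0. a j 0 t * (\<Sum>i<r. \<sigma> i * (\<Prod>l<k. a i l ((idx(0 := t)) l))))"
      unfolding u_def using that(2) by (intro sum.cong) (auto simp: A_po valid outer_def)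
    also have "\<dots> = \<sigma> j * (\<Prod>l\<in>{1..<k}. a j l (idx l))"
      unfolding modes[symmetric] using assms(1,2) that(1)
      by (intro contract_sum_prod_orthonormal) (auto simp: po_decomp_orthonormal[OF po])
    finally show ?thesis .
  qed
  have u_b: "u j idx = (\<Sum>i<r'. inner_vec (n 0) (a j 0) (b i 0) * w i idx)" if "idx \<in> D" for j idx
  proof -
    have "u j idx = (\<Sum>t<n 0. a j 0 t * (\<Sum>i<r'. 1 * (\<Prod>l<k. b i l ((idx(0 := t)) l))))"
      unfolding u_def using that by (intro sum.cong) (auto simp: A_b valid outer_def)
    also have "\<dots> = (\<Sum>i<r'. inner_vec (n 0) (a j 0) (b i 0) * w i idx)"
      unfolding w_def modes[symmetric] using assms(1,2) by (subst contract_sum_prod) auto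
    finally show ?thesis .
  qed
  have "card S \<le> r'"
  proof (rule card_le_if_independent_in_span_on[where D = D and u = u and w = w])
    show "finite S" unfolding S_def by simp
  next
    fix j
    show "\<exists>c. \<forall>idx\<in>D. u j idx = (\<Sum>i<r'. c i * w i idx)"
      using u_b by (intro exI[of _ "\<lambda>i. inner_vec (n 0) (a j 0) (b i 0)"]) simp
  next
    fix g assume zero: "\<forall>idx\<in>D. (\<Sum>j\<in>S. g j * u j idx) = 0"
    have "g j * \<sigma> j = 0" if "j \<in> S" for j
    proof (rule sum_prod_orthonormal_coeffs_zero[where L = "{1..<k}" and m = 1 and I = S])
      fix idx assume "\<forall>l\<in>{1..<k}. idx l < n l"
      then have "idx \<in> D" unfolding D_def by simp
      then show "(\<Sum>i\<in>S. g i * \<sigma> i * (\<Prod>l\<in>{1..<k}. a i l (idx l))) = 0"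
        using zero by (simp add: u_po S_def mult.assoc)
    qed (use that assms(1,2) unit in \<open>auto simp: S_def po_decomp_orthonormal[OF po]\<close>)
    then show "\<forall>j\<in>S. g j = 0"
      unfolding S_def by simp
  qed
  then show ?thesis unfolding S_def .
qed

lemma po_decomp_drop_zero_weights:
  assumes po: "po_decomp k n s A r \<sigma> a"
  shows "\<exists>\<sigma>' a'. po_decomp k n s A (card {i. i < r \<and> \<sigma> i \<noteq> 0}) \<sigma>' a'"
proof -
  define S where "S = {i. i < r \<and> \<sigma> i \<noteq> 0}"
  obtain h where h: "bij_betw h {..<card S} S"
    using ex_bij_betw_nat_finite[of S] unfolding S_def atLeast0LessThan by auto
  then have h_lt: "i < card S \<Longrightarrow> h i < r" and h_inj: "inj_on h {..<card S}" for i
    unfolding bij_betw_def S_def by auto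
  have sums: "(\<Sum>i<card S. \<sigma> (h i) * outer k (a (h i)) idx) = (\<Sum>i<r. \<sigma> i * outer k (a i) idx)"
    for idx
  proof -
    have "(\<Sum>i<card S. \<sigma> (h i) * outer k (a (h i)) idx) = (\<Sum>j\<in>S. \<sigma> j * outer k (a j) idx)"
      by (rule sum.reindex_bij_betw[OF h])
    also have "\<dots> = (\<Sum>i<r. \<sigma> i * outer k (a i) idx)"
      by (rule sum.mono_neutral_left) (auto simp: S_def)
    finally show ?thesis .
  qed
  have "po_decomp k n s A (card S) (\<sigma> \<circ> h) (a \<circ> h)"
    using po h_lt h_inj unfolding po_decomp_def inj_on_def
    by (simp add: sums tensor_eq_def) (meson lessThan_iff)
  then show ?thesis unfolding S_def by blast
qed

lemma is_decomp_of_po_decomp: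
  assumes "po_decomp k n s A r \<sigma> a" and "1 \<le> k"
  shows "is_decomp k n A r (\<lambda>i l j. if l = 0 then \<sigma> i * a i l j else a i l j)"
proof -
  have modes: "{..<k} = insert 0 {1..<k}" using assms(2) by auto
  have "outer k (\<lambda>l j. if l = 0 then \<sigma> i * a i l j else a i l j) idx = \<sigma> i * outer k (a i) idx"
    for i idx
  proof -
    have "(\<Prod>l\<in>{1..<k}. if l = 0 then \<sigma> i * a i l (idx l) else a i l (idx l))
        = (\<Prod>l\<in>{1..<k}. a i l (idx l))"
      by (intro prod.cong) auto
    then show ?thesis unfolding outer_def modes by simp
  qed
  then show ?thesis using assms(1) unfolding po_decomp_def is_decomp_def by simp
qed

lemma tensor_rank_po_decomp:
  assumes "2 \<le> s" and "s \<le> k" and po: "po_decomp k n s A r \<sigma> a"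
  shows "tensor_rank k n A = card {i. i < r \<and> \<sigma> i \<noteq> 0}"
  unfolding tensor_rank_def
proof (rule Least_equality)
  obtain \<sigma>' a' where "po_decomp k n s A (card {i. i < r \<and> \<sigma> i \<noteq> 0}) \<sigma>' a'"
    using po_decomp_drop_zero_weights[OF po] by blast
  then show "\<exists>b. is_decomp k n A (card {i. i < r \<and> \<sigma> i \<noteq> 0}) b"
    using is_decomp_of_po_decomp assms(1,2) by (meson le_trans one_le_numeral)
next
  fix r' assume "\<exists>b. is_decomp k n A r' b"
  then show "card {i. i < r \<and> \<sigma> i \<noteq> 0} \<le> r'"
    using po_decomp_support_card_le[OF assms] by blast
qed

lemma po_rank_eq_tensor_rank:
  assumes "2 \<le> s" and "s \<le> k" and "po_decomp k n s A r \<sigma> a"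
  shows "po_rank k n s A = tensor_rank k n A"
proof -
  have "\<exists>\<sigma> a. po_decomp k n s A (po_rank k n s A) \<sigma> a"
    unfolding po_rank_def by (rule LeastI) (use assms(3) in blast)
  then obtain \<sigma>0 a0 where po0: "po_decomp k n s A (po_rank k n s A) \<sigma>0 a0"
    by blast
  define S0 where "S0 = {i. i < po_rank k n s A \<and> \<sigma>0 i \<noteq> 0}"
  have "card S0 \<le> po_rank k n s A"
  proof -
    have "S0 \<subseteq> {..<po_rank k n s A}" unfolding S0_def by auto
    then show ?thesis using card_mono[OF finite_lessThan] by fastforce
  qed
  moreover have "po_rank k n s A \<le> card S0"
  proof -
    obtain \<sigma>1 a1 where "po_decomp k n s A (card S0) \<sigma>1 a1"
      using po_decomp_drop_zero_weights[OF po0] unfolding S0_def by blast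
    then show ?thesis
      unfolding po_rank_def by (intro Least_le) blast
  qed
  moreover have "tensor_rank k n A = card S0"
    unfolding S0_def by (rule tensor_rank_po_decomp[OF assms(1,2) po0])
  ultimately show ?thesis by simp
qed

theorem proposition3p3:
  fixes k s r :: nat and n :: "nat \<Rightarrow> nat" and A :: "(nat \<Rightarrow> nat) \<Rightarrow> real"
    and \<sigma> :: "nat \<Rightarrow> real" and a :: "nat \<Rightarrow> nat \<Rightarrow> nat \<Rightarrow> real"
  assumes "k \<ge> 3" and "2 \<le> s" and "s \<le> k"
    and "\<forall>l<s. r \<le> n l"
    and "A \<in> P_s k n s r"
    and "po_decomp k n s A r \<sigma> a"
  shows "tensor_rank k n A = card {i. i < r \<and> \<sigma> i \<noteq> 0}
     \<and> (\<forall>r' \<sigma>' a'. po_decomp k n s A r' \<sigma>' a' \<and> r' = po_rank k n s A \<longrightarrow>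
          is_decomp k n A r' (\<lambda>i l j. if l = 0 then \<sigma>' i * a' i l j else a' i l j)
          \<and> r' = tensor_rank k n A)"
proof (intro conjI allI impI)
  show "tensor_rank k n A = card {i. i < r \<and> \<sigma> i \<noteq> 0}"
    using assms(2,3,6) by (rule tensor_rank_po_decomp)
  fix r' \<sigma>' a' assume "po_decomp k n s A r' \<sigma>' a' \<and> r' = po_rank k n s A"
  then have po': "po_decomp k n s A r' \<sigma>' a'" and r': "r' = po_rank k n s A"
    by blast+
  show "is_decomp k n A r' (\<lambda>i l j. if l = 0 then \<sigma>' i * a' i l j else a' i l j)"
    using po' assms(1) by (simp add: is_decomp_of_po_decomp)
  show "r' = tensor_rank k n A"
    using r' po_rank_eq_tensor_rank[OF assms(2,3,6)] by simp
qed

end
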